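(* For every real $c>0$ and all integers $n,k\ge0$, $$|\beta_k^n|=\Big|\int_{-1}^1\overline P_k(x)\,\psi_{n,c}(x)\,dx\Big|\le\Big(\frac c2\Big)^k\frac{\sqrt\pi}{\Gamma(k+3/2)}\,\frac{1}{|\mu_n(c)|}.$$
   Context: $\overline P_k=\sqrt{k+1/2}\,P_k$ is the $L^2([-1,1])$-normalized Legendre polynomial. The prolate spheroidal wave functions $\psi_{n,c}$ (normalized by $\int_{-1}^1|\psi_{n,c}|^2=1$) are the eigenfunctions of the finite Fourier transform $Q_cf(x)=\int_{-1}^1e^{icxy}f(y)\,dy$ on $L^2([-1,1])$: $Q_c\psi_{n,c}=\mu_n(c)\psi_{n,c}$, with $\mu_n(c)\ne0$. $\Gamma$ is the Gamma function. *)

theory Defs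
  imports "HOL-Analysis.Analysis"
begin

fun legendre :: "nat \<Rightarrow> real \<Rightarrow> real" where
  "legendre 0 x = 1"
| "legendre (Suc 0) x = x"
| "legendre (Suc (Suc n)) x =
     ((2 * real n + 3) * x * legendre (Suc n) x - (real n + 1) * legendre n x) / (real n + 2)"

text \<open>L^2([-1,1])-normalized Legendre polynomial.\<close>
definition legendre_norm :: "nat \<Rightarrow> real \<Rightarrow> real" where
  "legendre_norm k x = sqrt (real k + 1/2) * legendre k x"

definition finite_fourier :: "real \<Rightarrow> (real \<Rightarrow> complex) \<Rightarrow> real \<Rightarrow> complex" where
  "finite_fourier c f x = (LINT y:{-1..1}|lborel. cis (c * x * y) * f y)"

end

theory Submission
  imports Defs "HOL-Computational_Algebra.Polynomial"
begin

(* Testing Q_c \<psi> = \<mu> \<psi> against P_k and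
   exchanging the integrals (Q_c is symmetric) gives
       \<mu> \<beta> = \<integral>_{-1}^1 \<psi>(y) K(y) dy,     K(y) = \<integral>_{-1}^1 P_k(x) e^(icxy) dx.
   By Rodrigues' formula P_k is the k-th derivative of (x^2-1)^k / (2^k k!), whose lower derivatives
   vanish at +-1; k integrations by parts and the Wallis integral \<integral>(1-x^2)^k = sqrt pi k!/Gamma(k+3/2)
   give |K(y)| <= sqrt(k+1/2) (c/2)^k sqrt pi / Gamma(k+3/2) |y|^k.  Finally Cauchy-Schwarz bounds
   \<integral>|\<psi>(y)| |y|^k by sqrt(2/(2k+1)), which cancels the factor sqrt(k+1/2). *)

definition poly_x :: "real poly" where "poly_x = [:0, 1:]"

definition poly_q :: "real poly" where "poly_q = [:-1, 0, 1:]"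

definition rodrigues_base :: "nat \<Rightarrow> real poly" where
  "rodrigues_base k = smult (1 / (2 ^ k * fact k)) (poly_q ^ k)"

definition rodrigues :: "nat \<Rightarrow> real poly" where
  "rodrigues k = (pderiv ^^ k) (rodrigues_base k)"

lemma pderiv_poly_x [simp]: "pderiv poly_x = 1"
  by (simp add: poly_x_def pderiv_pCons)

lemma pderiv_poly_q: "pderiv poly_q = 2 * poly_x"
  by (simp add: poly_q_def poly_x_def pderiv_pCons numeral_poly)

lemma poly_q_eq: "poly_q = poly_x * poly_x - 1"
  by (simp add: poly_q_def poly_x_def one_pCons)

lemma pderiv_of_nat_mult [simp]: "pderiv (of_nat n * p) = of_nat n * pderiv p"
  by (simp add: pderiv_mult)

lemma higher_pderiv_of_nat_mult: "(pderiv ^^ j) (of_nat n * p) = of_nat n * (pderiv ^^ j) p"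
  by (induction j) simp_all

lemma pderiv_rodrigues_base_Suc: "pderiv (rodrigues_base (Suc k)) = poly_x * rodrigues_base k"
proof -
  have "pderiv (rodrigues_base (Suc k))
      = smult (1 / (2 ^ Suc k * fact (Suc k))) (smult (of_nat (Suc k)) (poly_q ^ k) * pderiv poly_q)"
    unfolding rodrigues_base_def pderiv_smult pderiv_power_Suc ..
  also have "\<dots> = smult (1 / (2 ^ Suc k * fact (Suc k)) * (of_nat (Suc k) * 2)) (poly_x * poly_q ^ k)"
    by (simp add: pderiv_poly_q numeral_poly mult_smult_left mult_smult_right mult_ac del: of_nat_Suc)
  also have "1 / (2 ^ Suc k * fact (Suc k)) * (of_nat (Suc k) * 2) = (1 / (2 ^ k * fact k) :: real)"
    by (simp add: fact_Suc del: of_nat_Suc)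
  finally show ?thesis
    by (simp add: rodrigues_base_def mult_smult_right)
qed

lemma rodrigues_base_Suc: "of_nat (2 * Suc k) * rodrigues_base (Suc k) = poly_q * rodrigues_base k"
proof -
  have "real (2 * Suc k) / (2 ^ Suc k * fact (Suc k)) = 1 / (2 ^ k * fact k)"
    by (simp add: fact_Suc divide_simps)
  then show ?thesis
    by (simp add: rodrigues_base_def of_nat_poly smult_smult mult_smult_right del: fact_Suc of_nat_Suc)
qed

lemma higher_pderiv_mult_x:
  "(pderiv ^^ Suc n) (poly_x * p) = poly_x * (pderiv ^^ Suc n) p + of_nat (Suc n) * (pderiv ^^ n) p"
proof (induction n)
  case 0
  then show ?case by (simp add: pderiv_mult)
next
  case (Suc n)
  then show ?case
    by (simp only: funpow.simps o_apply) (simp add: pderiv_mult pderiv_add algebra_simps)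
qed

lemma higher_pderiv_mult_q:
  "(pderiv ^^ Suc (Suc n)) (poly_q * p) = poly_q * (pderiv ^^ Suc (Suc n)) p
     + 2 * of_nat (Suc (Suc n)) * (poly_x * (pderiv ^^ Suc n) p)
     + of_nat (Suc (Suc n)) * of_nat (Suc n) * (pderiv ^^ n) p"
proof (induction n)
  case 0
  then show ?case by (simp add: pderiv_mult pderiv_poly_q pderiv_add algebra_simps)
next
  case (Suc n)
  then show ?case
    by (simp only: funpow.simps o_apply)
      (simp add: pderiv_mult pderiv_poly_q pderiv_add algebra_simps)
qed

lemma rodrigues_0: "rodrigues 0 = 1"
  by (simp add: rodrigues_def rodrigues_base_def)

lemma rodrigues_1: "rodrigues (Suc 0) = poly_x"
  using pderiv_rodrigues_base_Suc[of 0] by (simp add: rodrigues_def rodrigues_base_def)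

lemma rodrigues_Suc_Suc:
  "rodrigues (Suc (Suc m)) = poly_x * rodrigues (Suc m) + of_nat (Suc m) * (pderiv ^^ m) (rodrigues_base (Suc m))"
proof -
  have "rodrigues (Suc (Suc m)) = (pderiv ^^ Suc m) (pderiv (rodrigues_base (Suc (Suc m))))"
    unfolding rodrigues_def funpow_Suc_right o_apply ..
  then show ?thesis
    by (simp only: pderiv_rodrigues_base_Suc higher_pderiv_mult_x rodrigues_def)
qed

lemma pderiv_rodrigues_Suc:
  "pderiv (rodrigues (Suc k)) = of_nat (Suc k) * rodrigues k + poly_x * pderiv (rodrigues k)"
proof (cases k)
  case 0
  then show ?thesis by (simp add: rodrigues_0 rodrigues_1)
next
  case (Suc m)
  have "pderiv ((pderiv ^^ m) (rodrigues_base (Suc m))) = rodrigues (Suc m)"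
    by (simp add: rodrigues_def)
  then show ?thesis
    unfolding Suc rodrigues_Suc_Suc by (simp add: pderiv_add pderiv_mult algebra_simps)
qed

lemma rodrigues_Suc:
  "of_nat (Suc k) * rodrigues (Suc k) = poly_q * pderiv (rodrigues k) + of_nat (Suc k) * (poly_x * rodrigues k)"
proof (cases k)
  case 0
  then show ?thesis by (simp add: rodrigues_0 rodrigues_1)
next
  case (Suc m)
  have "of_nat (2 * Suc k) * rodrigues (Suc k) = (pderiv ^^ Suc k) (of_nat (2 * Suc k) * rodrigues_base (Suc k))"
    unfolding rodrigues_def by (rule higher_pderiv_of_nat_mult[symmetric])
  also have "\<dots> = (pderiv ^^ Suc (Suc m)) (poly_q * rodrigues_base k)"
    by (simp only: rodrigues_base_Suc Suc)
  also have "\<dots> = poly_q * pderiv (rodrigues k) + 2 * of_nat (Suc k) * (poly_x * rodrigues k)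
                  + of_nat (Suc k) * (of_nat k * (pderiv ^^ m) (rodrigues_base k))"
    unfolding higher_pderiv_mult_q rodrigues_def Suc by (simp add: mult.assoc)
  also have "of_nat k * (pderiv ^^ m) (rodrigues_base k) = rodrigues (Suc k) - poly_x * rodrigues k"
    using rodrigues_Suc_Suc[of m] Suc by simp
  finally show ?thesis by (simp add: algebra_simps)
qed

lemma rodrigues_recurrence:
  "of_nat (Suc (Suc n)) * rodrigues (Suc (Suc n))
     = of_nat (2 * n + 3) * (poly_x * rodrigues (Suc n)) - of_nat (Suc n) * rodrigues n"
proof -
  have q_deriv: "poly_q * pderiv (rodrigues n) = of_nat (Suc n) * rodrigues (Suc n) - of_nat (Suc n) * (poly_x * rodrigues n)"
    using rodrigues_Suc[of n] by (simp add: algebra_simps)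
  have "poly_q * pderiv (rodrigues (Suc n)) = of_nat (Suc n) * (poly_q * rodrigues n) + poly_x * (poly_q * pderiv (rodrigues n))"
    by (simp add: pderiv_rodrigues_Suc algebra_simps)
  also have "\<dots> = of_nat (Suc n) * (poly_x * rodrigues (Suc n)) - of_nat (Suc n) * rodrigues n"
    by (subst q_deriv) (simp add: poly_q_eq algebra_simps)
  finally show ?thesis
    unfolding rodrigues_Suc[of "Suc n"] by (simp add: algebra_simps)
qed

lemma legendre_eq_rodrigues: "legendre k x = poly (rodrigues k) x"
proof (induction k x rule: legendre.induct)
  case (1 x)
  then show ?case by (simp add: rodrigues_0)
next
  case (2 x)
  then show ?case by (simp add: rodrigues_1 poly_x_def)
next
  case (3 n x)
  have "poly (of_nat (Suc (Suc n)) * rodrigues (Suc (Suc n))) x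
      = poly (of_nat (2 * n + 3) * (poly_x * rodrigues (Suc n)) - of_nat (Suc n) * rodrigues n) x"
    by (simp only: rodrigues_recurrence)
  then have "(real n + 2) * poly (rodrigues (Suc (Suc n))) x
      = (2 * real n + 3) * x * poly (rodrigues (Suc n)) x - (real n + 1) * poly (rodrigues n) x"
    by (simp add: of_nat_poly poly_x_def algebra_simps)
  then show ?case using 3 by (simp add: field_simps)
qed

lemma higher_pderiv_power_factor:
  fixes q p :: "'a::idom poly"
  assumes "j \<le> k"
  shows "\<exists>r. (pderiv ^^ j) (q ^ k * p) = q ^ (k - j) * r"
  using assms
proof (induction j)
  case 0
  then show ?case by auto
next
  case (Suc j)
  then obtain r where r: "(pderiv ^^ j) (q ^ k * p) = q ^ (k - j) * r" by auto
  obtain m where m: "k - j = Suc m" "k - Suc j = m"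
    using Suc.prems by (metis Suc_diff_Suc Suc_le_lessD)
  have "(pderiv ^^ Suc j) (q ^ k * p) = pderiv (q ^ Suc m * r)"
    using r m(1) by simp
  also have "\<dots> = q ^ m * (smult (of_nat (Suc m)) (pderiv q * r) + q * pderiv r)"
    by (simp only: pderiv_mult pderiv_power_Suc) (simp add: algebra_simps)
  finally show ?case
    using m(2) by blast
qed

lemma higher_pderiv_rodrigues_base_vanishes:
  assumes "j < k" "x = 1 \<or> x = -1"
  shows "poly ((pderiv ^^ j) (rodrigues_base k)) x = 0"
proof -
  obtain r where "(pderiv ^^ j) (poly_q ^ k * [:1 / (2^k * fact k):]) = poly_q ^ (k - j) * r"
    using higher_pderiv_power_factor assms(1) less_imp_le by blast
  moreover have "rodrigues_base k = poly_q ^ k * [:1 / (2^k * fact k):]"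
    by (simp add: rodrigues_base_def)
  moreover have "poly poly_q x = 0"
    using assms(2) by (auto simp: poly_q_def)
  ultimately show ?thesis using assms(1) by simp
qed

definition poly_fourier :: "real poly \<Rightarrow> real \<Rightarrow> complex" where
  "poly_fourier p a = integral {-1..1} (\<lambda>x. complex_of_real (poly p x) * cis (a * x))"

lemma has_vector_derivative_cis_linear:
  "((\<lambda>x. cis (a * x)) has_vector_derivative (\<i> * of_real a * cis (a * x))) (at x within S)"
proof -
  have "((\<lambda>x. a * x) has_derivative (\<lambda>t. a * t)) (at x within S)"
    by (auto intro!: derivative_eq_intros)
  from has_derivative_cis[OF this] show ?thesis
    unfolding has_vector_derivative_def
    by (rule has_derivative_eq_rhs) (auto simp: fun_eq_iff scaleR_conv_of_real algebra_simps)
qed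

(* Integration by parts: no boundary terms when p vanishes at both endpoints. *)
lemma poly_fourier_pderiv:
  assumes "poly p 1 = 0" "poly p (-1) = 0"
  shows "poly_fourier (pderiv p) a = - (\<i> * of_real a) * poly_fourier p a"
proof -
  let ?F = "\<lambda>x. complex_of_real (poly p x) * cis (a * x)"
  let ?G = "\<lambda>x. complex_of_real (poly (pderiv p) x) * cis (a * x)"
  have "((\<lambda>x. ?G x + (\<i> * of_real a) * ?F x) has_integral ?F 1 - ?F (-1)) {-1..1}"
  proof (rule fundamental_theorem_of_calculus)
    fix x :: real
    have "((\<lambda>x. complex_of_real (poly p x)) has_vector_derivative complex_of_real (poly (pderiv p) x))
            (at x within {-1..1})"
      by (intro has_vector_derivative_of_real) (rule DERIV_subset[OF poly_DERIV], simp)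
    from has_vector_derivative_mult[OF this has_vector_derivative_cis_linear[of a x]]
    show "(?F has_vector_derivative ?G x + (\<i> * of_real a) * ?F x) (at x within {-1..1})"
      by (rule has_vector_derivative_eq_rhs) (simp add: algebra_simps)
  qed simp
  then have "integral {-1..1} (\<lambda>x. ?G x + (\<i> * of_real a) * ?F x) = 0"
    using assms by (simp add: integral_unique)
  moreover have "integral {-1..1} (\<lambda>x. ?G x + (\<i> * of_real a) * ?F x)
      = poly_fourier (pderiv p) a + (\<i> * of_real a) * poly_fourier p a"
    unfolding poly_fourier_def
    by (subst integral_add) (auto intro!: integrable_continuous_interval continuous_intros)
  ultimately show ?thesis by (simp add: eq_neg_iff_add_eq_0)
qed

lemma poly_fourier_higher_pderiv_rodrigues_base:
  assumes "j \<le> k"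
  shows "poly_fourier ((pderiv ^^ j) (rodrigues_base k)) a = (- (\<i> * of_real a)) ^ j * poly_fourier (rodrigues_base k) a"
  using assms
proof (induction j)
  case 0
  then show ?case by simp
next
  case (Suc j)
  then show ?case
    using poly_fourier_pderiv[of "(pderiv ^^ j) (rodrigues_base k)" a]
      higher_pderiv_rodrigues_base_vanishes[of j k]
    by simp
qed

definition wallis :: "nat \<Rightarrow> real" where
  "wallis k = integral {-1..1} (\<lambda>x. (1 - x^2) ^ k)"

(* Integrating the derivative of x (1 - x^2)^(k+1) gives the recursion. *)
lemma wallis_Suc: "(2 * real k + 3) * wallis (Suc k) = (2 * real k + 2) * wallis k"
proof -
  let ?H = "\<lambda>x::real. x * (1 - x^2) ^ Suc k"
  let ?h = "\<lambda>x::real. (2 * real k + 3) * (1 - x^2) ^ Suc k - (2 * real k + 2) * (1 - x^2) ^ k"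
  have "(?h has_integral ?H 1 - ?H (-1)) {-1..1}"
  proof (rule fundamental_theorem_of_calculus)
    fix x :: real
    have "((\<lambda>x. 1 - x^2) has_real_derivative - (2 * x)) (at x within {-1..1})"
      by (auto intro!: derivative_eq_intros)
    from DERIV_mult'[OF DERIV_ident DERIV_power_Suc[OF this]]
    have "(?H has_real_derivative ?h x) (at x within {-1..1})"
      by (rule DERIV_cong) (simp add: algebra_simps power2_eq_square)
    then show "(?H has_vector_derivative ?h x) (at x within {-1..1})"
      by (simp add: has_real_derivative_iff_has_vector_derivative)
  qed simp
  then have "integral {-1..1} ?h = 0"
    by (simp add: integral_unique)
  moreover have "integral {-1..1} ?h = (2 * real k + 3) * wallis (Suc k) - (2 * real k + 2) * wallis k"
    unfolding wallis_def
    by (subst integral_diff) (auto intro!: integrable_continuous_interval continuous_intros simp del: power_Suc)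
  ultimately show ?thesis by simp
qed

lemma Gamma_plus1_pos: "x > 0 \<Longrightarrow> Gamma (x + 1) = x * Gamma (x :: real)"
  by (rule Gamma_plus1) (auto dest: nonpos_Ints_nonpos)

lemma wallis_eq_Gamma: "wallis k = sqrt pi * fact k / Gamma (real k + 3/2)"
proof (induction k)
  case 0
  have Gamma_three_halves: "Gamma (3/2 :: real) = sqrt pi / 2"
    using Gamma_plus1_pos[of "1/2"] by (simp add: Gamma_one_half_real)
  show ?case by (simp add: wallis_def Gamma_three_halves)
next
  case (Suc k)
  have Gamma_Suc: "Gamma (real (Suc k) + 3/2) = (real k + 3/2) * Gamma (real k + 3/2)"
    using Gamma_plus1_pos[of "real k + 3/2"] by (simp add: add_ac)
  have "Gamma (real k + 3/2) > 0"
    by (intro Gamma_real_pos) simp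
  moreover have "wallis (Suc k) = (real k + 1) / (real k + 3/2) * wallis k"
    using wallis_Suc[of k] by (simp add: field_simps)
  ultimately show ?case
    unfolding Gamma_Suc Suc.IH fact_Suc by (simp add: field_simps)
qed

(* The trivial bound |U_k(x) e^(iax)| <= (1 - x^2)^k / (2^k k!), integrated. *)
lemma poly_fourier_rodrigues_base_bound:
  "norm (poly_fourier (rodrigues_base k) a) \<le> sqrt pi / (2 ^ k * Gamma (real k + 3/2))"
proof -
  have "norm (poly_fourier (rodrigues_base k) a) \<le> integral {-1..1} (\<lambda>x. (1 - x^2) ^ k / (2 ^ k * fact k))"
    unfolding poly_fourier_def
  proof (rule integral_norm_bound_integral)
    fix x :: real
    assume "x \<in> {-1..1}"
    then have "x^2 \<le> 1"
      by (auto simp: abs_square_le_1)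
    then have "\<bar>poly (rodrigues_base k) x\<bar> = (1 - x^2) ^ k / (2 ^ k * fact k)"
      by (simp add: rodrigues_base_def poly_q_def poly_power power2_eq_square power_abs flip: abs_minus_commute)
    then show "norm (complex_of_real (poly (rodrigues_base k) x) * cis (a * x)) \<le> (1 - x^2) ^ k / (2 ^ k * fact k)"
      by (simp add: norm_mult)
  qed (auto intro!: integrable_continuous_interval continuous_intros)
  also have "\<dots> = wallis k / (2 ^ k * fact k)"
    unfolding wallis_def by simp
  finally show ?thesis
    by (simp add: wallis_eq_Gamma mult.commute)
qed

(* The key estimate: the Fourier transform of P_k on [-1, 1] is O(|a|^k), by Rodrigues' formula
   and k integrations by parts. *)
lemma legendre_fourier_bound:
  "norm (integral {-1..1} (\<lambda>x. complex_of_real (legendre k x) * cis (a * x)))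
     \<le> \<bar>a\<bar> ^ k * (sqrt pi / (2 ^ k * Gamma (real k + 3/2)))"
proof -
  have "integral {-1..1} (\<lambda>x. complex_of_real (legendre k x) * cis (a * x))
      = (- (\<i> * of_real a)) ^ k * poly_fourier (rodrigues_base k) a"
    unfolding legendre_eq_rodrigues rodrigues_def poly_fourier_def[symmetric]
    by (rule poly_fourier_higher_pderiv_rodrigues_base) simp
  then show ?thesis
    using mult_left_mono[OF poly_fourier_rodrigues_base_bound, of "\<bar>a\<bar> ^ k" k a]
    by (simp add: norm_mult norm_power)
qed

lemma continuous_on_legendre_norm: "continuous_on S (legendre_norm k)"
  unfolding legendre_norm_def[abs_def] legendre_eq_rodrigues by (intro continuous_intros)

lemma borel_measurable_legendre_norm [measurable]: "legendre_norm k \<in> borel_measurable lborel"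
  unfolding measurable_lborel2 by (intro borel_measurable_continuous_onI continuous_on_legendre_norm)

lemma legendre_norm_kernel_bound:
  "norm (LINT x:{-1..1}|lborel. complex_of_real (legendre_norm k x) * cis (c * x * y))
     \<le> sqrt (real k + 1/2) * ((\<bar>c\<bar> / 2) ^ k * sqrt pi / Gamma (real k + 3/2)) * \<bar>y\<bar> ^ k"
proof -
  have "set_integrable lborel {-1..1} (\<lambda>x. complex_of_real (legendre_norm k x) * cis (c * x * y))"
    by (intro borel_integrable_atLeastAtMost' continuous_intros continuous_on_legendre_norm)
  then have "(LINT x:{-1..1}|lborel. complex_of_real (legendre_norm k x) * cis (c * x * y))
      = of_real (sqrt (real k + 1/2)) * integral {-1..1} (\<lambda>x. complex_of_real (legendre k x) * cis ((c * y) * x))"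
    by (simp add: set_borel_integral_eq_integral(2) legendre_norm_def mult_ac flip: integral_mult_right)
  moreover have "sqrt (real k + 1/2) * norm (integral {-1..1} (\<lambda>x. complex_of_real (legendre k x) * cis ((c * y) * x)))
      \<le> sqrt (real k + 1/2) * (\<bar>c * y\<bar> ^ k * (sqrt pi / (2 ^ k * Gamma (real k + 3/2))))"
    by (intro mult_left_mono legendre_fourier_bound) simp
  ultimately show ?thesis
    by (simp add: norm_mult abs_mult power_mult_distrib power_divide mult_ac)
qed

(* If f^2 and g^2 are integrable then so is fg, since 2|fg| <= f^2 + g^2. *)
lemma integrable_abs_mult_of_squares:
  fixes f g :: "'a \<Rightarrow> real"
  assumes [measurable]: "f \<in> borel_measurable M" "g \<in> borel_measurable M"
    and "integrable M (\<lambda>x. (f x)\<^sup>2)" "integrable M (\<lambda>x. (g x)\<^sup>2)"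
  shows "integrable M (\<lambda>x. \<bar>f x * g x\<bar>)"
proof (rule Bochner_Integration.integrable_bound)
  show "integrable M (\<lambda>x. (f x)\<^sup>2 + (g x)\<^sup>2)"
    using assms(3,4) by (rule Bochner_Integration.integrable_add)
  show "AE x in M. norm \<bar>f x * g x\<bar> \<le> norm ((f x)\<^sup>2 + (g x)\<^sup>2)"
  proof (rule AE_I2)
    fix x
    have "0 \<le> (\<bar>f x\<bar> - \<bar>g x\<bar>)\<^sup>2" by simp
    then have "2 * \<bar>f x * g x\<bar> \<le> (f x)\<^sup>2 + (g x)\<^sup>2"
      by (simp add: power2_eq_square abs_mult algebra_simps)
    then show "norm \<bar>f x * g x\<bar> \<le> norm ((f x)\<^sup>2 + (g x)\<^sup>2)"
      by simp
  qed
qed measurable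

lemma integral_cauchy_schwarz:
  fixes f g :: "'a \<Rightarrow> real"
  assumes [measurable]: "f \<in> borel_measurable M" "g \<in> borel_measurable M"
    and f2: "integrable M (\<lambda>x. (f x)\<^sup>2)" and g2: "integrable M (\<lambda>x. (g x)\<^sup>2)"
  shows "(\<integral>x. \<bar>f x * g x\<bar> \<partial>M) \<le> sqrt (\<integral>x. (f x)\<^sup>2 \<partial>M) * sqrt (\<integral>x. (g x)\<^sup>2 \<partial>M)"
proof -
  have square_integral: "(\<integral>\<^sup>+x. ennreal \<bar>h x\<bar> ^ 2 \<partial>M) = ennreal (\<integral>x. (h x)\<^sup>2 \<partial>M)"
    if "integrable M (\<lambda>x. (h x)\<^sup>2)" for h :: "'a \<Rightarrow> real"
    using nn_integral_eq_integral[OF that] by (simp add: ennreal_power)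
  have "ennreal (\<integral>x. \<bar>f x * g x\<bar> \<partial>M) = (\<integral>\<^sup>+x. ennreal \<bar>f x\<bar> * ennreal \<bar>g x\<bar> \<partial>M)"
    using nn_integral_eq_integral[OF integrable_abs_mult_of_squares[OF assms]]
    by (simp add: abs_mult ennreal_mult)
  then have "ennreal (\<integral>x. \<bar>f x * g x\<bar> \<partial>M) ^ 2
      \<le> ennreal (\<integral>x. (f x)\<^sup>2 \<partial>M) * ennreal (\<integral>x. (g x)\<^sup>2 \<partial>M)"
    using Cauchy_Schwarz_nn_integral[of "\<lambda>x. ennreal \<bar>f x\<bar>" M "\<lambda>x. ennreal \<bar>g x\<bar>"]
    by (simp add: square_integral[OF f2] square_integral[OF g2])
  then have "(\<integral>x. \<bar>f x * g x\<bar> \<partial>M)\<^sup>2 \<le> (\<integral>x. (f x)\<^sup>2 \<partial>M) * (\<integral>x. (g x)\<^sup>2 \<partial>M)"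
    by (simp add: ennreal_power ennreal_mult[symmetric])
  then show ?thesis
    by (simp add: real_le_rsqrt real_sqrt_mult[symmetric])
qed

lemma set_integral_cauchy_schwarz:
  fixes f g :: "'a \<Rightarrow> real"
  assumes [measurable]: "f \<in> borel_measurable M" "g \<in> borel_measurable M" "S \<in> sets M"
    and f2: "set_integrable M S (\<lambda>x. (f x)\<^sup>2)" and g2: "set_integrable M S (\<lambda>x. (g x)\<^sup>2)"
  shows "set_integrable M S (\<lambda>x. \<bar>f x * g x\<bar>)"
    and "(LINT x:S|M. \<bar>f x * g x\<bar>) \<le> sqrt (LINT x:S|M. (f x)\<^sup>2) * sqrt (LINT x:S|M. (g x)\<^sup>2)"
proof -
  define F where "F x = indicator S x * f x" for x
  define G where "G x = indicator S x * g x" for x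
  have [measurable]: "F \<in> borel_measurable M" "G \<in> borel_measurable M"
    unfolding F_def G_def by measurable
  have squares: "(F x)\<^sup>2 = indicator S x *\<^sub>R (f x)\<^sup>2" "(G x)\<^sup>2 = indicator S x *\<^sub>R (g x)\<^sup>2"
    and product: "\<bar>F x * G x\<bar> = indicator S x *\<^sub>R \<bar>f x * g x\<bar>" for x
    by (auto simp: F_def G_def indicator_def)
  have "integrable M (\<lambda>x. (F x)\<^sup>2)" "integrable M (\<lambda>x. (G x)\<^sup>2)"
    using f2 g2 unfolding squares set_integrable_def .
  from integrable_abs_mult_of_squares[OF _ _ this] integral_cauchy_schwarz[OF _ _ this]
  show "set_integrable M S (\<lambda>x. \<bar>f x * g x\<bar>)"
    and "(LINT x:S|M. \<bar>f x * g x\<bar>) \<le> sqrt (LINT x:S|M. (f x)\<^sup>2) * sqrt (LINT x:S|M. (g x)\<^sup>2)"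
    unfolding set_integrable_def set_lebesgue_integral_def squares product by simp_all
qed

lemma set_integrable_of_square_Icc:
  fixes f :: "real \<Rightarrow> real"
  assumes [measurable]: "f \<in> borel_measurable lborel"
    and "set_integrable lborel {-1..1} (\<lambda>x. (f x)\<^sup>2)"
  shows "set_integrable lborel {-1..1} f"
proof -
  have "set_integrable lborel {-1..1} (\<lambda>x. \<bar>f x * 1\<bar>)"
    using assms by (intro set_integral_cauchy_schwarz(1)) (auto intro: borel_integrable_atLeastAtMost')
  then show ?thesis
    by (subst set_integrable_abs_iff[symmetric]) (auto simp: set_borel_measurable_def)
qed

lemma set_integral_power_square:
  "set_integrable lborel {-1..1} (\<lambda>y::real. (y ^ k)\<^sup>2)"
  "(LINT y:{-1..1}|lborel. (y ^ k)\<^sup>2 :: real) = 2 / (2 * real k + 1)"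
proof -
  show "set_integrable lborel {-1..1} (\<lambda>y::real. (y ^ k)\<^sup>2)"
    by (intro borel_integrable_atLeastAtMost' continuous_intros)
  have "(y ^ k)\<^sup>2 = y ^ (2 * k)" for y :: real
    by (simp add: power_mult mult.commute)
  then have "(LINT y:{-1..1}|lborel. (y ^ k)\<^sup>2) = (\<integral>y. y ^ (2 * k) * indicator {-1..1} (y :: real) \<partial>lborel)"
    unfolding set_lebesgue_integral_def by (simp add: mult.commute)
  also have "\<dots> = 2 / (2 * real k + 1)"
    by (subst integral_power) auto
  finally show "(LINT y:{-1..1}|lborel. (y ^ k)\<^sup>2) = 2 / (2 * real k + 1)" .
qed

lemma kernel_moment_bound:
  fixes \<psi> :: "real \<Rightarrow> real" and K :: "real \<Rightarrow> complex"
  assumes [measurable]: "\<psi> \<in> borel_measurable lborel"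
    and sq_int: "set_integrable lborel {-1..1} (\<lambda>x. (\<psi> x)\<^sup>2)"
    and normalized: "(LINT x:{-1..1}|lborel. (\<psi> x)\<^sup>2) = 1"
    and int: "set_integrable lborel {-1..1} (\<lambda>y. complex_of_real (\<psi> y) * K y)"
    and K_bound: "\<And>y. norm (K y) \<le> A * \<bar>y\<bar> ^ k" and A_nonneg: "0 \<le> A"
  shows "norm (LINT y:{-1..1}|lborel. complex_of_real (\<psi> y) * K y) \<le> A * sqrt (2 / (2 * real k + 1))"
proof -
  note cauchy_schwarz = set_integral_cauchy_schwarz[of \<psi> lborel "\<lambda>y. y ^ k",
      OF _ _ _ sq_int set_integral_power_square(1)]
  have "norm (LINT y:{-1..1}|lborel. complex_of_real (\<psi> y) * K y)
      \<le> (LINT y:{-1..1}|lborel. norm (complex_of_real (\<psi> y) * K y))"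
    by (rule set_integral_norm_bound[OF int])
  also have "\<dots> \<le> (LINT y:{-1..1}|lborel. A * \<bar>\<psi> y * y ^ k\<bar>)"
  proof (rule set_integral_mono)
    show "set_integrable lborel {-1..1} (\<lambda>y. norm (complex_of_real (\<psi> y) * K y))"
      using int by (rule set_integrable_norm)
    show "set_integrable lborel {-1..1} (\<lambda>y. A * \<bar>\<psi> y * y ^ k\<bar>)"
      using cauchy_schwarz(1) by simp
    fix y
    show "norm (complex_of_real (\<psi> y) * K y) \<le> A * \<bar>\<psi> y * y ^ k\<bar>"
      using mult_left_mono[OF K_bound[of y] abs_ge_zero[of "\<psi> y"]]
      by (simp add: norm_mult abs_mult power_abs mult_ac)
  qed
  also have "\<dots> \<le> A * sqrt (2 / (2 * real k + 1))"
    using mult_left_mono[OF cauchy_schwarz(2) A_nonneg]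
    by (simp add: normalized set_integral_power_square(2))
  finally show ?thesis .
qed

lemma borel_measurable_cis [measurable]: "cis \<in> borel_measurable borel"
  by (intro borel_measurable_continuous_onI continuous_intros)

lemma set_integrable_complex_of_real:
  "set_integrable M A f \<Longrightarrow> set_integrable M A (\<lambda>x. complex_of_real (f x))"
  unfolding set_integrable_def by (simp add: scaleR_conv_of_real flip: of_real_mult)

lemma borel_measurable_finite_fourier [measurable]:
  assumes [measurable]: "f \<in> borel_measurable lborel"
  shows "finite_fourier c f \<in> borel_measurable lborel"
  unfolding finite_fourier_def set_lebesgue_integral_def
  by (rule lborel.borel_measurable_lebesgue_integral) measurable

(* Q_c is symmetric for the bilinear pairing on [-1, 1] (Fubini). *)
lemma finite_fourier_pairing:
  fixes f g :: "real \<Rightarrow> complex"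
  assumes [measurable]: "f \<in> borel_measurable lborel" "g \<in> borel_measurable lborel"
    and f_int: "set_integrable lborel {-1..1} f" and g_int: "set_integrable lborel {-1..1} g"
  shows "set_integrable lborel {-1..1} (\<lambda>y. f y * (LINT x:{-1..1}|lborel. g x * cis (c * x * y)))"
    and "(LINT x:{-1..1}|lborel. g x * finite_fourier c f x)
       = (LINT y:{-1..1}|lborel. f y * (LINT x:{-1..1}|lborel. g x * cis (c * x * y)))"
proof -
  define F where "F x y = (indicator {-1..1} x *\<^sub>R g x) * (indicator {-1..1} y *\<^sub>R (cis (c * x * y) * f y))"
    for x y :: real
  have F_measurable [measurable]: "(\<lambda>(x, y). F x y) \<in> borel_measurable (lborel \<Otimes>\<^sub>M lborel)"
    unfolding F_def by measurable
  have norm_F: "norm (F x y) = (indicator {-1..1} x *\<^sub>R norm (g x)) * (indicator {-1..1} y *\<^sub>R norm (f y))"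
    for x y
    by (simp add: F_def norm_mult indicator_def)
  have F_integrable: "integrable (lborel \<Otimes>\<^sub>M lborel) (\<lambda>(x, y). F x y)"
  proof (rule lborel_pair.Fubini_integrable)
    define C where "C = (\<integral>y. indicator {-1..1} y *\<^sub>R norm (f y) \<partial>lborel)"
    have "(\<integral>y. norm (case_prod F (x, y)) \<partial>lborel) = (indicator {-1..1} x *\<^sub>R norm (g x)) * C" for x
      unfolding case_prod_conv norm_F C_def by (rule integral_mult_right_zero)
    moreover have "integrable lborel (\<lambda>x. (indicator {-1..1} x *\<^sub>R norm (g x)) * C)"
      using set_integrable_norm[OF g_int] unfolding set_integrable_def by (rule integrable_mult_left)
    ultimately show "integrable lborel (\<lambda>x. \<integral>y. norm (case_prod F (x, y)) \<partial>lborel)"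
      by simp
    show "AE x in lborel. integrable lborel (\<lambda>y. case_prod F (x, y))"
    proof (rule AE_I2)
      fix x
      have "integrable lborel (\<lambda>y. indicator {-1..1} y *\<^sub>R (cis (c * x * y) * f y))"
        using f_int unfolding set_integrable_def
        by (rule Bochner_Integration.integrable_bound) (auto simp: norm_mult indicator_def)
      then show "integrable lborel (\<lambda>y. case_prod F (x, y))"
        unfolding F_def case_prod_conv by (rule integrable_mult_right)
    qed
  qed (rule F_measurable)
  have inner_y: "(\<integral>y. F x y \<partial>lborel) = (indicator {-1..1} x *\<^sub>R g x) * finite_fourier c f x" for x
    unfolding F_def finite_fourier_def set_lebesgue_integral_def by (rule integral_mult_right_zero)
  have inner_x: "(\<integral>x. F x y \<partial>lborel)
      = indicator {-1..1} y *\<^sub>R (f y * (LINT x:{-1..1}|lborel. g x * cis (c * x * y)))" for y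
  proof -
    have "(\<integral>x. F x y \<partial>lborel)
        = (\<integral>x. (indicator {-1..1} y *\<^sub>R f y) * (indicator {-1..1} x *\<^sub>R (g x * cis (c * x * y))) \<partial>lborel)"
      by (rule Bochner_Integration.integral_cong) (auto simp: F_def indicator_def)
    also have "\<dots> = (indicator {-1..1} y *\<^sub>R f y) * (LINT x:{-1..1}|lborel. g x * cis (c * x * y))"
      unfolding set_lebesgue_integral_def by (rule integral_mult_right_zero)
    finally show ?thesis by simp
  qed
  show "set_integrable lborel {-1..1} (\<lambda>y. f y * (LINT x:{-1..1}|lborel. g x * cis (c * x * y)))"
    using lborel_pair.integrable_snd[OF F_integrable] unfolding inner_x set_integrable_def .
  show "(LINT x:{-1..1}|lborel. g x * finite_fourier c f x)
       = (LINT y:{-1..1}|lborel. f y * (LINT x:{-1..1}|lborel. g x * cis (c * x * y)))"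
    using lborel_pair.Fubini_integral[OF F_integrable]
    unfolding inner_x inner_y set_lebesgue_integral_def by simp
qed

lemma eigenfunction_moment:
  fixes \<psi> g :: "real \<Rightarrow> real" and \<mu> :: complex
  assumes [measurable]: "\<psi> \<in> borel_measurable lborel" "g \<in> borel_measurable lborel"
    and \<psi>_int: "set_integrable lborel {-1..1} \<psi>" and g_int: "set_integrable lborel {-1..1} g"
    and eigen: "AE x in lborel. x \<in> {-1..1} \<longrightarrow>
                  finite_fourier c (\<lambda>y. complex_of_real (\<psi> y)) x = \<mu> * complex_of_real (\<psi> x)"
  shows "set_integrable lborel {-1..1}
           (\<lambda>y. complex_of_real (\<psi> y) * (LINT x:{-1..1}|lborel. complex_of_real (g x) * cis (c * x * y)))"
    and "\<mu> * complex_of_real (LINT x:{-1..1}|lborel. g x * \<psi> x)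
       = (LINT y:{-1..1}|lborel. complex_of_real (\<psi> y) * (LINT x:{-1..1}|lborel. complex_of_real (g x) * cis (c * x * y)))"
      (is "?moment = ?rhs")
proof -
  note pairing = finite_fourier_pairing[of "\<lambda>y. complex_of_real (\<psi> y)" "\<lambda>x. complex_of_real (g x)",
      OF _ _ set_integrable_complex_of_real[OF \<psi>_int] set_integrable_complex_of_real[OF g_int]]
  show "set_integrable lborel {-1..1}
           (\<lambda>y. complex_of_real (\<psi> y) * (LINT x:{-1..1}|lborel. complex_of_real (g x) * cis (c * x * y)))"
    by (rule pairing(1)) measurable
  have "?moment = (LINT x:{-1..1}|lborel. complex_of_real (g x) * (\<mu> * complex_of_real (\<psi> x)))"
    by (simp add: mult_ac flip: set_integral_complex_of_real)
  also have "\<dots> = (LINT x:{-1..1}|lborel. complex_of_real (g x) * finite_fourier c (\<lambda>y. complex_of_real (\<psi> y)) x)"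
    using eigen by (intro set_lebesgue_integral_cong_AE) (auto elim!: eventually_mono)
  also have "\<dots> = ?rhs"
    by (rule pairing(2)) measurable
  finally show "?moment = ?rhs" .
qed

theorem lemma7:
  fixes c :: real and psi :: "nat \<Rightarrow> real \<Rightarrow> real" and mu :: "nat \<Rightarrow> complex"
  assumes "c > 0"
    and meas: "\<And>n. psi n \<in> borel_measurable lborel"
    and sq_int: "\<And>n. set_integrable lborel {-1..1} (\<lambda>x. (psi n x)\<^sup>2)"
    and normalized: "\<And>n. (LINT x:{-1..1}|lborel. (psi n x)\<^sup>2) = 1"
    and eigen: "\<And>n. AE x in lborel. x \<in> {-1..1} \<longrightarrow>
                  finite_fourier c (\<lambda>y. complex_of_real (psi n y)) x = mu n * complex_of_real (psi n x)"
    and mu_nz: "\<And>n. mu n \<noteq> 0"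
  shows "\<And>n k. \<bar>LINT x:{-1..1}|lborel. legendre_norm k x * psi n x\<bar>
           \<le> (c / 2) ^ k * sqrt pi / Gamma (real k + 3 / 2) * (1 / cmod (mu n))"
proof -
  fix n k
  define B where "B = (c / 2) ^ k * sqrt pi / Gamma (real k + 3 / 2)"
  define A where "A = sqrt (real k + 1/2) * B"
  have psi_int: "set_integrable lborel {-1..1} (psi n)"
    by (rule set_integrable_of_square_Icc[OF meas sq_int])
  have legendre_int: "set_integrable lborel {-1..1} (legendre_norm k)"
    by (intro borel_integrable_atLeastAtMost' continuous_on_legendre_norm)
  note moment = eigenfunction_moment[OF meas borel_measurable_legendre_norm psi_int legendre_int eigen]
  have kernel_bound: "norm (LINT x:{-1..1}|lborel. complex_of_real (legendre_norm k x) * cis (c * x * y))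
      \<le> A * \<bar>y\<bar> ^ k" for y
    using legendre_norm_kernel_bound[of k c y] \<open>c > 0\<close> by (simp add: A_def B_def)
  have A_nonneg: "0 \<le> A"
    by (simp add: A_def B_def \<open>c > 0\<close> less_imp_le)
  have "cmod (mu n) * \<bar>LINT x:{-1..1}|lborel. legendre_norm k x * psi n x\<bar>
      = norm (LINT y:{-1..1}|lborel. complex_of_real (psi n y)
                * (LINT x:{-1..1}|lborel. complex_of_real (legendre_norm k x) * cis (c * x * y)))"
    by (simp flip: moment(2) add: norm_mult)
  also have "\<dots> \<le> A * sqrt (2 / (2 * real k + 1))"
    by (rule kernel_moment_bound[OF meas sq_int normalized moment(1) kernel_bound A_nonneg])
  also have "A * sqrt (2 / (2 * real k + 1)) = B"
    by (simp add: A_def field_simps flip: real_sqrt_mult)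
  finally show "\<bar>LINT x:{-1..1}|lborel. legendre_norm k x * psi n x\<bar> \<le> B * (1 / cmod (mu n))"
    using mu_nz[of n] by (simp add: field_simps)
qed

end
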